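(* Let $X$ be a set, $E$ an equivalence relation on $X$, and $\tau_0\subseteq\tau_1\subseteq\cdots$ quasi-Polish topologies on $X$ such that for each $i$ the $E$-saturation of every $\tau_i$-open set is $\tau_i$-open. Let $\tau$ be the topology generated by $\bigcup_i\tau_i$. Then the map $h:(X,\tau)/\!/E\to\varprojlim_i(X,\tau_i)/\!/E$, $[x]_{\approx_E^\tau}\mapsto([x]_{\approx_E^{\tau_i}})_i$, is a homeomorphism.
   Context: For a topology $\sigma$ on $X$, $x\approx_E^\sigma y$ iff the $\sigma$-closures of $[x]_E$ and $[y]_E$ coincide, and $(X,\sigma)/\!/E:=X/{\approx_E^\sigma}$ with the quotient topology. For $i$, the maps $(X,\tau_{i+1})/\!/E\to(X,\tau_i)/\!/E$, $[x]_{\approx^{\tau_{i+1}}_E}\mapsto[x]_{\approx^{\tau_i}_E}$, form an inverse sequence; $\varprojlim_i(X,\tau_i)/\!/E$ is the set of compatible sequences in $\prod_i(X,\tau_i)/\!/E$ with the subspace of the product topology. ($\tau$ is quasi-Polish and also has the saturation property.) A quasi-Polish space is a space homeomorphic to a $\mathbf\Pi^0_2$ subset of $\mathbb S^{\mathbb N}$ with $\mathbb S$ the Sierpiński space. *)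

theory Defs
  imports "HOL-Analysis.Analysis"
begin

definition sierpinski_space :: "bool topology" where
  "sierpinski_space = topology (\<lambda>U. U \<in> {{}, {True}, UNIV})"

definition sierpinski_cube :: "(nat \<Rightarrow> bool) topology" where
  "sierpinski_cube = product_topology (\<lambda>_. sierpinski_space) UNIV"

definition sigma02_in :: "'a topology \<Rightarrow> 'a set \<Rightarrow> bool" where
  "sigma02_in T A \<longleftrightarrow> (\<exists>U V :: nat \<Rightarrow> 'a set.
      (\<forall>n. openin T (U n) \<and> openin T (V n)) \<and> A = (\<Union>n. U n - V n))"

definition pi02_in :: "'a topology \<Rightarrow> 'a set \<Rightarrow> bool" where
  "pi02_in T A \<longleftrightarrow> A \<subseteq> topspace T \<and> sigma02_in T (topspace T - A)"

definition quasi_polish :: "'a topology \<Rightarrow> bool" where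
  "quasi_polish T \<longleftrightarrow> (\<exists>A. pi02_in sierpinski_cube A \<and>
      T homeomorphic_space subtopology sierpinski_cube A)"

definition saturation :: "('a \<times> 'a) set \<Rightarrow> 'a set \<Rightarrow> 'a set" where
  "saturation E U = E `` U"

definition approx_class :: "'a topology \<Rightarrow> ('a \<times> 'a) set \<Rightarrow> 'a \<Rightarrow> 'a set" where
  "approx_class \<sigma> E x =
     {y \<in> topspace \<sigma>. \<sigma> closure_of (E `` {y}) = \<sigma> closure_of (E `` {x})}"

definition approx_classes :: "'a topology \<Rightarrow> ('a \<times> 'a) set \<Rightarrow> 'a set set" where
  "approx_classes \<sigma> E = approx_class \<sigma> E ` topspace \<sigma>"

definition sep_quotient :: "'a topology \<Rightarrow> ('a \<times> 'a) set \<Rightarrow> 'a set topology" where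
  "sep_quotient \<sigma> E = topology (\<lambda>W. W \<subseteq> approx_classes \<sigma> E \<and>
      openin \<sigma> {x \<in> topspace \<sigma>. approx_class \<sigma> E x \<in> W})"

text \<open>Inverse limit of the sequence (X,\<tau>_i)//E with bonding maps
  [x]_{i+1} \<mapsto> [x]_i, as a subspace of the product.\<close>
definition sep_quotient_limit :: "(nat \<Rightarrow> 'a topology) \<Rightarrow> ('a \<times> 'a) set \<Rightarrow> (nat \<Rightarrow> 'a set) topology" where
  "sep_quotient_limit \<tau> E =
     subtopology (product_topology (\<lambda>i. sep_quotient (\<tau> i) E) UNIV)
       {s. \<forall>i. \<forall>x \<in> topspace (\<tau> (Suc i)). s (Suc i) = approx_class (\<tau> (Suc i)) E x
                 \<longrightarrow> s i = approx_class (\<tau> i) E x}"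

end

theory Submission
  imports Defs
begin

text \<open>Two points are \<approx>-equivalent for the join topology iff they are so for every \<tau> i,
  because an open set of the join is locally open in some \<tau> i. This makes the map well defined
  and injective, and continuous since every \<tau> i is coarser than the join. Openness follows as
  the E-saturation of a \<tau> i-open set is \<tau> i-open and hence gives an open set of
  (X, \<tau> i)//E. The real content is surjectivity: given x_i with x_(i+1) \<approx>_i x_i, embed every
  (X, \<tau> i) into the Sierpinski cube as a Pi^0_2 set and construct, by finite approximations
  realised in the E-classes of the x_k, codes A_i which satisfy the Pi^0_2 conditions, all code
  one point x, and lie in the saturation of every basic \<tau> i-open set whose saturation contains
  x_i. Then x \<approx>_i x_i for every i.\<close>

lemma openin_sierpinski_space: "openin sierpinski_space U \<longleftrightarrow> U \<in> {{}, {True}, UNIV}"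
proof -
  have "istopology (\<lambda>U::bool set. U \<in> {{}, {True}, UNIV})"
    unfolding istopology_def
  proof (intro conjI allI impI)
    fix K :: "bool set set" assume "\<forall>S\<in>K. S \<in> {{}, {True}, UNIV}"
    then have "\<Union>K = {} \<or> \<Union>K = {True} \<or> \<Union>K = UNIV"
      by (cases "UNIV \<in> K"; cases "{True} \<in> K"; auto; metis (full_types) UNIV_eq_I insertE singletonD)
    then show "\<Union>K \<in> {{}, {True}, UNIV}" by auto
  qed auto
  then show ?thesis unfolding sierpinski_space_def by simp
qed

lemma topspace_sierpinski_space: "topspace sierpinski_space = UNIV"
  unfolding topspace_def using openin_sierpinski_space by auto

lemma topspace_sierpinski_cube: "topspace sierpinski_cube = UNIV"
  unfolding sierpinski_cube_def by (simp add: topspace_sierpinski_space)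

definition cube_nbhd :: "nat set \<Rightarrow> (nat \<Rightarrow> bool) set" where
  "cube_nbhd F = {f. \<forall>m\<in>F. f m}"

lemma openin_cube_nbhd: "finite F \<Longrightarrow> openin sierpinski_cube (cube_nbhd F)"
proof -
  assume F: "finite F"
  have "cube_nbhd F = (\<Pi>\<^sub>E i\<in>UNIV. if i \<in> F then {True} else UNIV)"
    by (auto simp: cube_nbhd_def PiE_iff) (metis singletonD)+
  moreover have "openin sierpinski_cube (\<Pi>\<^sub>E i\<in>UNIV. if i \<in> F then {True} else UNIV)"
    unfolding sierpinski_cube_def
    by (rule product_topology_basis)
      (auto simp: openin_sierpinski_space topspace_sierpinski_space intro: finite_subset[OF _ F])
  ultimately show ?thesis by simp
qed

lemma sierpinski_cube_open_basis:
  assumes "openin sierpinski_cube Ob" "f \<in> Ob"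
  obtains F where "finite F" "f \<in> cube_nbhd F" "cube_nbhd F \<subseteq> Ob"
proof -
  obtain Y where Y: "f \<in> (\<Pi>\<^sub>E i\<in>UNIV. Y i)" "\<And>i. openin sierpinski_space (Y i)"
    "finite {i. Y i \<noteq> topspace sierpinski_space}" "(\<Pi>\<^sub>E i\<in>UNIV. Y i) \<subseteq> Ob"
    using product_topology_open_contains_basis[OF assms[unfolded sierpinski_cube_def]] by blast
  define F where "F = {i. Y i \<noteq> UNIV}"
  have Y_F: "Y i = (if i \<in> F then {True} else UNIV)" for i
  proof -
    have "Y i \<in> {{}, {True}, UNIV}" using Y(2)[of i] by (simp add: openin_sierpinski_space)
    moreover have "f i \<in> Y i" using Y(1) by (simp add: PiE_iff)
    ultimately show ?thesis by (auto simp: F_def)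
  qed
  have "finite F" using Y(3) by (simp add: F_def topspace_sierpinski_space)
  moreover have "f \<in> cube_nbhd F"
  proof -
    have "f i" if "i \<in> F" for i
      using Y(1) Y_F[of i] that by (auto simp: PiE_iff)
    then show ?thesis by (simp add: cube_nbhd_def)
  qed
  moreover have "cube_nbhd F \<subseteq> Ob"
  proof
    fix g assume "g \<in> cube_nbhd F"
    then have "g \<in> (\<Pi>\<^sub>E i\<in>UNIV. Y i)"
      by (simp add: PiE_iff cube_nbhd_def Y_F)
    then show "g \<in> Ob" using Y(4) by blast
  qed
  ultimately show thesis by (rule that)
qed

lemma sierpinski_cube_open_upclosed:
  assumes "openin sierpinski_cube Ob" "f \<in> Ob" "\<And>m. f m \<Longrightarrow> g m"
  shows "g \<in> Ob"
proof -
  obtain F where "f \<in> cube_nbhd F" "cube_nbhd F \<subseteq> Ob"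
    using sierpinski_cube_open_basis[OF assms(1,2)] by blast
  then show ?thesis using assms(3) by (auto simp: cube_nbhd_def)
qed

lemma homeomorphic_maps_subtopology_openin:
  assumes "homeomorphic_maps T (subtopology S A) f g"
  shows "openin S Ob \<Longrightarrow> openin T {y \<in> topspace T. f y \<in> Ob}"
    and "openin T W \<Longrightarrow> \<exists>Ob. openin S Ob \<and> W = {y \<in> topspace T. f y \<in> Ob}"
proof -
  have cf: "continuous_map T (subtopology S A) f"
    and cg: "continuous_map (subtopology S A) T g"
    and gf: "\<And>x. x \<in> topspace T \<Longrightarrow> g (f x) = x"
    using assms unfolding homeomorphic_maps_def by auto
  have fA: "f x \<in> topspace S \<inter> A" if "x \<in> topspace T" for x
    using cf that unfolding continuous_map_def by auto
  show "openin T {y \<in> topspace T. f y \<in> Ob}" if "openin S Ob"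
  proof -
    have "openin (subtopology S A) (Ob \<inter> A)"
      using that by (auto simp: openin_subtopology)
    then have "openin T {y \<in> topspace T. f y \<in> Ob \<inter> A}"
      using cf unfolding continuous_map_def by blast
    moreover have "{y \<in> topspace T. f y \<in> Ob \<inter> A} = {y \<in> topspace T. f y \<in> Ob}"
      using fA by auto
    ultimately show ?thesis by simp
  qed
  show "\<exists>Ob. openin S Ob \<and> W = {y \<in> topspace T. f y \<in> Ob}" if "openin T W"
  proof -
    have "openin (subtopology S A) {a \<in> topspace (subtopology S A). g a \<in> W}"
      using cg that unfolding continuous_map_def by blast
    then obtain Ob where Ob: "openin S Ob" "{a \<in> topspace S \<inter> A. g a \<in> W} = Ob \<inter> A"
      unfolding openin_subtopology by auto
    have "W = {y \<in> topspace T. f y \<in> Ob}"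
    proof (intro set_eqI iffI)
      fix y assume "y \<in> W"
      moreover have "y \<in> topspace T" using openin_subset[OF that] \<open>y \<in> W\<close> by auto
      ultimately have "f y \<in> {a \<in> topspace S \<inter> A. g a \<in> W}" using fA gf by auto
      then show "y \<in> {y \<in> topspace T. f y \<in> Ob}" using Ob(2) \<open>y \<in> topspace T\<close> by auto
    next
      fix y assume "y \<in> {y \<in> topspace T. f y \<in> Ob}"
      then have "y \<in> topspace T" "f y \<in> Ob \<inter> A" using fA by auto
      then have "f y \<in> {a \<in> topspace S \<inter> A. g a \<in> W}" using Ob(2) by blast
      then show "y \<in> W" using gf \<open>y \<in> topspace T\<close> by auto
    qed
    then show ?thesis using Ob(1) by blast
  qed
qed

definition cube_pi02_embedding ::
    "'a topology \<Rightarrow> ('a \<Rightarrow> nat \<Rightarrow> bool) \<Rightarrow> (nat \<Rightarrow> (nat \<Rightarrow> bool) set) \<Rightarrow> (nat \<Rightarrow> (nat \<Rightarrow> bool) set) \<Rightarrow> bool"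
  where
  "cube_pi02_embedding T e U V \<longleftrightarrow> inj_on e (topspace T) \<and>
     (\<forall>n. openin sierpinski_cube (U n) \<and> openin sierpinski_cube (V n)) \<and>
     (\<forall>f. f \<in> e ` topspace T \<longleftrightarrow> (\<forall>n. f \<in> U n \<longrightarrow> f \<in> V n)) \<and>
     (\<forall>Ob. openin sierpinski_cube Ob \<longrightarrow> openin T {y \<in> topspace T. e y \<in> Ob}) \<and>
     (\<forall>W. openin T W \<longrightarrow> (\<exists>Ob. openin sierpinski_cube Ob \<and> W = {y \<in> topspace T. e y \<in> Ob}))"

lemma quasi_polish_cube_pi02_embedding:
  assumes "quasi_polish T"
  obtains e U V where "cube_pi02_embedding T e U V"
proof -
  obtain A f g where A: "pi02_in sierpinski_cube A"
    and fg: "homeomorphic_maps T (subtopology sierpinski_cube A) f g"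
    using assms unfolding quasi_polish_def homeomorphic_space_def by blast
  have "\<And>x. x \<in> topspace T \<Longrightarrow> g (f x) = x"
    using fg unfolding homeomorphic_maps_def by auto
  then have inj: "inj_on f (topspace T)" by (metis inj_on_inverseI)
  have "f ` topspace T = A"
    using homeomorphic_imp_surjective_map[OF homeomorphic_maps_imp_map[OF fg]]
    by (simp add: topspace_sierpinski_cube)
  moreover obtain U V :: "nat \<Rightarrow> (nat \<Rightarrow> bool) set"
    where UV: "\<forall>n. openin sierpinski_cube (U n) \<and> openin sierpinski_cube (V n)"
      "topspace sierpinski_cube - A = (\<Union>n. U n - V n)"
    using A unfolding pi02_in_def sigma02_in_def by blast
  ultimately have image: "h \<in> f ` topspace T \<longleftrightarrow> (\<forall>n. h \<in> U n \<longrightarrow> h \<in> V n)" for h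
    by (auto simp: topspace_sierpinski_cube set_eq_iff)
  have "cube_pi02_embedding T f U V"
    unfolding cube_pi02_embedding_def
    using inj UV(1) image homeomorphic_maps_subtopology_openin[OF fg] by blast
  then show thesis by (rule that)
qed

definition sat_indist :: "'a topology \<Rightarrow> ('a \<times> 'a) set \<Rightarrow> 'a \<Rightarrow> 'a \<Rightarrow> bool" where
  "sat_indist \<sigma> E x y \<longleftrightarrow> (\<forall>W. openin \<sigma> W \<longrightarrow> (x \<in> E `` W \<longleftrightarrow> y \<in> E `` W))"

lemma sat_indist_refl: "sat_indist \<sigma> E x x"
  by (simp add: sat_indist_def)

lemma sat_indist_sym: "sat_indist \<sigma> E x y \<Longrightarrow> sat_indist \<sigma> E y x"
  by (auto simp: sat_indist_def)

lemma sat_indist_trans: "sat_indist \<sigma> E x y \<Longrightarrow> sat_indist \<sigma> E y z \<Longrightarrow> sat_indist \<sigma> E x z"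
  by (auto simp: sat_indist_def)

lemma sat_indist_if_related:
  assumes "equiv X E" "(x, y) \<in> E"
  shows "sat_indist \<sigma> E x y"
  using assms unfolding sat_indist_def equiv_def sym_def trans_def by blast

lemma sat_indist_coarser:
  assumes "\<And>W. openin \<sigma> W \<Longrightarrow> openin \<sigma>' W" "sat_indist \<sigma>' E x y"
  shows "sat_indist \<sigma> E x y"
  using assms unfolding sat_indist_def by blast

lemma in_closure_of_class:
  assumes "sym E"
  shows "z \<in> \<sigma> closure_of (E `` {x}) \<longleftrightarrow>
           z \<in> topspace \<sigma> \<and> (\<forall>T. z \<in> T \<and> openin \<sigma> T \<longrightarrow> x \<in> E `` T)"
proof -
  have "(\<exists>y. y \<in> E `` {x} \<and> y \<in> T) \<longleftrightarrow> x \<in> E `` T" for T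
    using assms unfolding sym_def by auto
  then show ?thesis unfolding in_closure_of by simp
qed

lemma closure_of_class_eq_iff:
  assumes "sym E" "E \<subseteq> topspace \<sigma> \<times> topspace \<sigma>"
  shows "\<sigma> closure_of (E `` {x}) = \<sigma> closure_of (E `` {y}) \<longleftrightarrow> sat_indist \<sigma> E x y"
proof
  assume eq: "\<sigma> closure_of (E `` {x}) = \<sigma> closure_of (E `` {y})"
  have "b \<in> E `` W"
    if cl: "\<sigma> closure_of (E `` {a}) = \<sigma> closure_of (E `` {b})"
      and "a \<in> E `` W" "openin \<sigma> W" for a b W
  proof -
    from that obtain w where w: "w \<in> W" "(w, a) \<in> E" by auto
    have "w \<in> topspace \<sigma>" using w(2) assms(2) by auto
    then have "w \<in> \<sigma> closure_of (E `` {a})"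
      unfolding in_closure_of_class[OF assms(1)] using w(2) by auto
    then have "w \<in> \<sigma> closure_of (E `` {b})" using cl by simp
    then show ?thesis unfolding in_closure_of_class[OF assms(1)] using w(1) that(3) by blast
  qed
  then show "sat_indist \<sigma> E x y" unfolding sat_indist_def using eq by metis
next
  assume "sat_indist \<sigma> E x y"
  then have "x \<in> E `` T \<longleftrightarrow> y \<in> E `` T" if "openin \<sigma> T" for T
    using that unfolding sat_indist_def by blast
  then show "\<sigma> closure_of (E `` {x}) = \<sigma> closure_of (E `` {y})"
    by (simp add: set_eq_iff in_closure_of_class[OF assms(1)])
qed

lemma mem_approx_class_iff:
  assumes "equiv (topspace \<sigma>) E"
  shows "y \<in> approx_class \<sigma> E x \<longleftrightarrow> y \<in> topspace \<sigma> \<and> sat_indist \<sigma> E y x"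
proof -
  have "sym E" and "E \<subseteq> topspace \<sigma> \<times> topspace \<sigma>"
    using assms unfolding equiv_def refl_on_def by auto
  from closure_of_class_eq_iff[OF this, of y x] show ?thesis
    by (simp add: approx_class_def)
qed

lemma approx_class_eq_iff:
  assumes "equiv (topspace \<sigma>) E" "x \<in> topspace \<sigma>"
  shows "approx_class \<sigma> E x = approx_class \<sigma> E y \<longleftrightarrow> sat_indist \<sigma> E x y"
proof
  assume eq: "approx_class \<sigma> E x = approx_class \<sigma> E y"
  have "x \<in> approx_class \<sigma> E x"
    unfolding mem_approx_class_iff[OF assms(1)] using assms(2) sat_indist_refl by simp
  then have "x \<in> approx_class \<sigma> E y" by (simp only: eq)
  then show "sat_indist \<sigma> E x y" by (simp only: mem_approx_class_iff[OF assms(1)])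
next
  assume "sat_indist \<sigma> E x y"
  then have "sat_indist \<sigma> E z x \<longleftrightarrow> sat_indist \<sigma> E z y" for z
    using sat_indist_sym sat_indist_trans by meson
  then show "approx_class \<sigma> E x = approx_class \<sigma> E y"
    by (intro set_eqI) (simp only: mem_approx_class_iff[OF assms(1)])
qed

lemma openin_sep_quotient:
  "openin (sep_quotient \<sigma> E) W \<longleftrightarrow>
     W \<subseteq> approx_classes \<sigma> E \<and> openin \<sigma> {x \<in> topspace \<sigma>. approx_class \<sigma> E x \<in> W}"
proof -
  have "istopology (\<lambda>W. W \<subseteq> approx_classes \<sigma> E \<and>
      openin \<sigma> {x \<in> topspace \<sigma>. approx_class \<sigma> E x \<in> W})"
    unfolding istopology_def
  proof (rule conjI; intro allI impI)
    fix S T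
    assume a: "S \<subseteq> approx_classes \<sigma> E \<and> openin \<sigma> {x \<in> topspace \<sigma>. approx_class \<sigma> E x \<in> S}"
      "T \<subseteq> approx_classes \<sigma> E \<and> openin \<sigma> {x \<in> topspace \<sigma>. approx_class \<sigma> E x \<in> T}"
    have "{x \<in> topspace \<sigma>. approx_class \<sigma> E x \<in> S \<inter> T} =
        {x \<in> topspace \<sigma>. approx_class \<sigma> E x \<in> S} \<inter> {x \<in> topspace \<sigma>. approx_class \<sigma> E x \<in> T}"
      by auto
    then show "S \<inter> T \<subseteq> approx_classes \<sigma> E \<and>
        openin \<sigma> {x \<in> topspace \<sigma>. approx_class \<sigma> E x \<in> S \<inter> T}"
      using a by auto
  next
    fix K
    assume a: "\<forall>S\<in>K. S \<subseteq> approx_classes \<sigma> E \<and>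
        openin \<sigma> {x \<in> topspace \<sigma>. approx_class \<sigma> E x \<in> S}"
    have "{x \<in> topspace \<sigma>. approx_class \<sigma> E x \<in> \<Union>K} =
        \<Union>((\<lambda>S. {x \<in> topspace \<sigma>. approx_class \<sigma> E x \<in> S}) ` K)"
      by auto
    then show "\<Union>K \<subseteq> approx_classes \<sigma> E \<and>
        openin \<sigma> {x \<in> topspace \<sigma>. approx_class \<sigma> E x \<in> \<Union>K}"
      using a by (auto intro!: openin_Union)
  qed
  then show ?thesis by (simp add: sep_quotient_def)
qed

lemma topspace_sep_quotient: "topspace (sep_quotient \<sigma> E) = approx_classes \<sigma> E"
proof -
  have "{x \<in> topspace \<sigma>. approx_class \<sigma> E x \<in> approx_classes \<sigma> E} = topspace \<sigma>"
    by (auto simp: approx_classes_def)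
  then have "openin (sep_quotient \<sigma> E) (approx_classes \<sigma> E)"
    unfolding openin_sep_quotient by simp
  then have "approx_classes \<sigma> E \<subseteq> topspace (sep_quotient \<sigma> E)"
    by (rule openin_subset)
  moreover have "topspace (sep_quotient \<sigma> E) \<subseteq> approx_classes \<sigma> E"
    using openin_topspace[of "sep_quotient \<sigma> E"] unfolding openin_sep_quotient by blast
  ultimately show ?thesis by blast
qed

lemma approx_class_some_member:
  assumes "equiv (topspace \<sigma>) E" "topspace \<sigma>' = topspace \<sigma>"
    and "\<And>W. openin \<sigma> W \<Longrightarrow> openin \<sigma>' W" "x \<in> topspace \<sigma>"
  shows "approx_class \<sigma> E (SOME y. y \<in> approx_class \<sigma>' E x) = approx_class \<sigma> E x"
proof -
  have equiv': "equiv (topspace \<sigma>') E" using assms(1,2) by simp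
  have "x \<in> approx_class \<sigma>' E x"
    using assms(2,4) by (simp add: mem_approx_class_iff[OF equiv'] sat_indist_refl)
  then have "(SOME y. y \<in> approx_class \<sigma>' E x) \<in> approx_class \<sigma>' E x"
    by (rule someI)
  then have "(SOME y. y \<in> approx_class \<sigma>' E x) \<in> topspace \<sigma>"
    and "sat_indist \<sigma>' E (SOME y. y \<in> approx_class \<sigma>' E x) x"
    using assms(2) by (auto simp: mem_approx_class_iff[OF equiv'])
  moreover note sat_indist_coarser[of \<sigma> \<sigma>', OF assms(3) this(2)]
  ultimately show ?thesis by (simp add: approx_class_eq_iff[OF assms(1)])
qed

lemma continuous_map_sep_quotient_coarser:
  assumes "equiv (topspace \<sigma>) E" "topspace \<sigma>' = topspace \<sigma>"
    and "\<And>W. openin \<sigma> W \<Longrightarrow> openin \<sigma>' W"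
  shows "continuous_map (sep_quotient \<sigma>' E) (sep_quotient \<sigma> E)
           (\<lambda>C. approx_class \<sigma> E (SOME y. y \<in> C))"
proof -
  have class_eq: "approx_class \<sigma> E (SOME y. y \<in> approx_class \<sigma>' E x) = approx_class \<sigma> E x"
    if "x \<in> topspace \<sigma>" for x
    using approx_class_some_member[OF assms that] .
  have topspace': "topspace (sep_quotient \<sigma>' E) = approx_class \<sigma>' E ` topspace \<sigma>"
    by (simp add: topspace_sep_quotient approx_classes_def assms(2))
  show ?thesis
    unfolding continuous_map_def
  proof (intro conjI allI impI)
    show "(\<lambda>C. approx_class \<sigma> E (SOME y. y \<in> C)) \<in> topspace (sep_quotient \<sigma>' E) \<rightarrow> topspace (sep_quotient \<sigma> E)"
      using class_eq by (auto simp: topspace' topspace_sep_quotient approx_classes_def assms(2))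
  next
    fix Wq assume "openin (sep_quotient \<sigma> E) Wq"
    then have "openin \<sigma>' {x \<in> topspace \<sigma>. approx_class \<sigma> E x \<in> Wq}"
      by (simp add: openin_sep_quotient assms(3))
    moreover have "{x \<in> topspace \<sigma>'. approx_class \<sigma>' E x \<in>
          {C \<in> topspace (sep_quotient \<sigma>' E). approx_class \<sigma> E (SOME y. y \<in> C) \<in> Wq}} =
        {x \<in> topspace \<sigma>. approx_class \<sigma> E x \<in> Wq}"
      using class_eq by (auto simp: topspace' assms(2))
    ultimately show "openin (sep_quotient \<sigma>' E)
        {C \<in> topspace (sep_quotient \<sigma>' E). approx_class \<sigma> E (SOME y. y \<in> C) \<in> Wq}"
      by (auto simp: openin_sep_quotient topspace_sep_quotient)
  qed
qed

lemma approx_class_preimage_image: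
  assumes "equiv (topspace \<sigma>) E" "openin \<sigma> (E `` U)"
  shows "{y \<in> topspace \<sigma>. approx_class \<sigma> E y \<in> approx_class \<sigma> E ` (E `` U)} = E `` U"
proof (intro set_eqI iffI)
  fix y assume "y \<in> {y \<in> topspace \<sigma>. approx_class \<sigma> E y \<in> approx_class \<sigma> E ` (E `` U)}"
  then obtain u where "y \<in> topspace \<sigma>" "u \<in> E `` U" "sat_indist \<sigma> E y u"
    using approx_class_eq_iff[OF assms(1)] by blast
  moreover have "u \<in> E `` (E `` U)" "E `` (E `` U) \<subseteq> E `` U"
    using assms(1) \<open>u \<in> E `` U\<close> unfolding equiv_def refl_on_def trans_def by blast+
  ultimately show "y \<in> E `` U"
    using assms(2) unfolding sat_indist_def by blast
next
  fix y assume "y \<in> E `` U"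
  moreover have "E `` U \<subseteq> topspace \<sigma>" by (rule openin_subset[OF assms(2)])
  ultimately show "y \<in> {y \<in> topspace \<sigma>. approx_class \<sigma> E y \<in> approx_class \<sigma> E ` (E `` U)}"
    by blast
qed

lemma openin_sep_quotient_image:
  assumes "equiv (topspace \<sigma>) E" "openin \<sigma> (E `` U)"
  shows "openin (sep_quotient \<sigma> E) (approx_class \<sigma> E ` (E `` U))"
  unfolding openin_sep_quotient approx_class_preimage_image[OF assms]
  using assms openin_subset by (fastforce simp: approx_classes_def)

lemma topspace_sep_quotient_limit:
  "s \<in> topspace (sep_quotient_limit \<tau> E) \<longleftrightarrow> (\<forall>i. s i \<in> approx_classes (\<tau> i) E) \<and>
     (\<forall>i. \<forall>x \<in> topspace (\<tau> (Suc i)). s (Suc i) = approx_class (\<tau> (Suc i)) E x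
        \<longrightarrow> s i = approx_class (\<tau> i) E x)"
  by (simp add: sep_quotient_limit_def topspace_sep_quotient PiE_iff)

lemma approx_class_preimage_saturated:
  assumes "equiv (topspace \<sigma>) E"
  shows "E `` {x \<in> topspace \<sigma>. approx_class \<sigma> E x \<in> W} \<subseteq> {x \<in> topspace \<sigma>. approx_class \<sigma> E x \<in> W}"
proof
  fix y assume "y \<in> E `` {x \<in> topspace \<sigma>. approx_class \<sigma> E x \<in> W}"
  then obtain u where u: "u \<in> topspace \<sigma>" "approx_class \<sigma> E u \<in> W" "(u, y) \<in> E" by blast
  then have "y \<in> topspace \<sigma>" using assms unfolding equiv_def refl_on_def by blast
  moreover have "approx_class \<sigma> E y = approx_class \<sigma> E u"
    using sat_indist_if_related[OF assms, of y u] assms u(3) \<open>y \<in> topspace \<sigma>\<close>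
    unfolding equiv_def sym_def by (simp add: approx_class_eq_iff[OF assms])
  ultimately show "y \<in> {x \<in> topspace \<sigma>. approx_class \<sigma> E x \<in> W}" using u(2) by simp
qed

lemma openin_sep_quotient_limit_coordinate:
  assumes "openin (sep_quotient (\<tau> i) E) Q"
  shows "openin (sep_quotient_limit \<tau> E) {t \<in> topspace (sep_quotient_limit \<tau> E). t i \<in> Q}"
proof -
  have "continuous_map (sep_quotient_limit \<tau> E) (sep_quotient (\<tau> i) E) (\<lambda>t. t i)"
    unfolding sep_quotient_limit_def
    by (rule continuous_map_from_subtopology[OF continuous_map_product_projection]) simp
  then show ?thesis using assms by (rule openin_continuous_map_preimage)
qed

text \<open>A requirement (s, c, S, c', S') asks that e c' y \<in> S' whenever e c y \<in> S, for the points y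
  of W k with k \<ge> s. The solution is the union of an increasing sequence of finite conditions
  (coordinates forced to be True), each realised by a point of the corresponding W k; stage k
  serves the requirement with index fst (prod_decode k), so every requirement recurs at
  arbitrarily late stages.\<close>

locale cube_requirements =
  fixes W :: "nat \<Rightarrow> 'a set" and e :: "nat \<Rightarrow> 'a \<Rightarrow> nat \<Rightarrow> bool"
    and R :: "nat \<Rightarrow> nat \<times> nat \<times> (nat \<Rightarrow> bool) set \<times> nat \<times> (nat \<Rightarrow> bool) set"
  assumes W_0_nonempty: "W 0 \<noteq> {}"
    and W_Suc_dense: "\<And>k G y. (\<And>i. finite (G i)) \<Longrightarrow> (\<And>i. k < i \<Longrightarrow> G i = {}) \<Longrightarrow> y \<in> W k \<Longrightarrow>
      (\<And>i. e i y \<in> cube_nbhd (G i)) \<Longrightarrow> \<exists>y'\<in>W (Suc k). \<forall>i. e i y' \<in> cube_nbhd (G i)"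
    and requirement_open: "\<And>r s c S c' S'. R r = (s, c, S, c', S') \<Longrightarrow>
      openin sierpinski_cube S \<and> openin sierpinski_cube S'"
    and requirement_valid: "\<And>r s c S c' S' k y. R r = (s, c, S, c', S') \<Longrightarrow> s \<le> k \<Longrightarrow> y \<in> W k \<Longrightarrow>
      e c y \<in> S \<Longrightarrow> e c' y \<in> S'"
begin

definition realized :: "nat \<Rightarrow> (nat \<Rightarrow> nat set) \<Rightarrow> bool" where
  "realized k G \<longleftrightarrow> (\<forall>i. finite (G i)) \<and> (\<forall>i. k < i \<longrightarrow> G i = {}) \<and>
     (\<exists>y\<in>W k. \<forall>i. e i y \<in> cube_nbhd (G i))"

definition triggered :: "nat \<Rightarrow> (nat \<Rightarrow> nat set) \<Rightarrow> bool" where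
  "triggered k G \<longleftrightarrow> (case R (fst (prod_decode k)) of (s, c, S, c', S') \<Rightarrow>
     s \<le> k \<and> c \<le> k \<and> c' \<le> k \<and> (\<lambda>m. m \<in> G c) \<in> S)"

definition response :: "nat \<Rightarrow> (nat \<Rightarrow> nat set) \<Rightarrow> nat set" where
  "response k G = (case R (fst (prod_decode k)) of (s, c, S, c', S') \<Rightarrow>
     SOME H. finite H \<and> (\<lambda>m. m \<in> H) \<in> S' \<and>
       (\<exists>y\<in>W k. (\<forall>i. e i y \<in> cube_nbhd (G i)) \<and> e c' y \<in> cube_nbhd H))"

definition target :: "nat \<Rightarrow> nat" where
  "target k = (case R (fst (prod_decode k)) of (s, c, S, c', S') \<Rightarrow> c')"

definition extend :: "nat \<Rightarrow> (nat \<Rightarrow> nat set) \<Rightarrow> nat \<Rightarrow> nat set" where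
  "extend k G = (if triggered k G then G(target k := G (target k) \<union> response k G) else G)"

definition condition :: "nat \<Rightarrow> nat \<Rightarrow> nat set" where
  "condition = rec_nat (\<lambda>_. {}) extend"

definition solution :: "nat \<Rightarrow> nat \<Rightarrow> bool" where
  "solution i m \<longleftrightarrow> (\<exists>k. m \<in> condition k i)"

lemma condition_0: "condition 0 = (\<lambda>_. {})"
  and condition_Suc: "condition (Suc k) = extend k (condition k)"
  by (simp_all add: condition_def)

lemma response_spec:
  assumes "realized k G" "triggered k G" "R (fst (prod_decode k)) = (s, c, S, c', S')"
  shows "finite (response k G) \<and> (\<lambda>m. m \<in> response k G) \<in> S' \<and>
    (\<exists>y\<in>W k. (\<forall>i. e i y \<in> cube_nbhd (G i)) \<and> e c' y \<in> cube_nbhd (response k G))"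
proof -
  obtain y where y: "y \<in> W k" "\<And>i. e i y \<in> cube_nbhd (G i)"
    using assms(1) unfolding realized_def by blast
  have "s \<le> k" "(\<lambda>m. m \<in> G c) \<in> S"
    using assms(2,3) unfolding triggered_def by auto
  have S: "openin sierpinski_cube S" and S': "openin sierpinski_cube S'"
    using requirement_open[OF assms(3)] by auto
  have "e c y \<in> S"
    using sierpinski_cube_open_upclosed[OF S \<open>(\<lambda>m. m \<in> G c) \<in> S\<close>] y(2)[of c]
    by (auto simp: cube_nbhd_def)
  then have "e c' y \<in> S'"
    using requirement_valid[OF assms(3) \<open>s \<le> k\<close> y(1)] by blast
  then obtain H where H: "finite H" "e c' y \<in> cube_nbhd H" "cube_nbhd H \<subseteq> S'"
    using sierpinski_cube_open_basis[OF S'] by metis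
  then have "finite H \<and> (\<lambda>m. m \<in> H) \<in> S' \<and>
      (\<exists>y\<in>W k. (\<forall>i. e i y \<in> cube_nbhd (G i)) \<and> e c' y \<in> cube_nbhd H)"
    using y by (auto simp: cube_nbhd_def)
  then show ?thesis
    unfolding response_def assms(3) prod.case by (rule someI)
qed

lemma realized_extend:
  assumes "realized k G"
  shows "(\<forall>i. finite (extend k G i)) \<and> (\<forall>i. k < i \<longrightarrow> extend k G i = {}) \<and>
    (\<exists>y\<in>W k. \<forall>i. e i y \<in> cube_nbhd (extend k G i))"
proof (cases "triggered k G")
  case True
  obtain s c S c' S' where R: "R (fst (prod_decode k)) = (s, c, S, c', S')"
    by (metis prod_cases5)
  have "c' \<le> k" and target: "target k = c'"
    using True R unfolding triggered_def target_def by auto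
  then have extend: "extend k G = G(c' := G c' \<union> response k G)"
    using True unfolding extend_def by simp
  obtain y where y: "y \<in> W k" "\<And>i. e i y \<in> cube_nbhd (G i)" "e c' y \<in> cube_nbhd (response k G)"
    and "finite (response k G)"
    using response_spec[OF assms True R] by blast
  have "e i y \<in> cube_nbhd (extend k G i)" for i
    using y(2,3) by (cases "i = c'") (auto simp: extend cube_nbhd_def)
  moreover have "finite (extend k G i)" for i
    using assms \<open>finite (response k G)\<close> unfolding extend realized_def by simp
  moreover have "extend k G i = {}" if "k < i" for i
    using assms \<open>c' \<le> k\<close> that unfolding extend realized_def by simp
  ultimately show ?thesis using y(1) by blast
next
  case False
  then show ?thesis using assms unfolding extend_def realized_def by simp
qed

lemma realized_condition: "realized k (condition k)"
proof (induction k)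
  case 0
  then show ?case using W_0_nonempty by (auto simp: realized_def condition_0 cube_nbhd_def)
next
  case (Suc k)
  then obtain y where "\<And>i. finite (extend k (condition k) i)"
    "\<And>i. k < i \<Longrightarrow> extend k (condition k) i = {}"
    "y \<in> W k" "\<And>i. e i y \<in> cube_nbhd (extend k (condition k) i)"
    using realized_extend by blast
  with W_Suc_dense[OF this] show ?case
    unfolding realized_def condition_Suc by auto
qed

lemma condition_mono: "k \<le> k' \<Longrightarrow> condition k i \<subseteq> condition k' i"
  using lift_Suc_mono_le[of "\<lambda>k. condition k i"]
  by (auto simp: condition_Suc extend_def)

lemma finite_solution_support:
  assumes "finite F" "solution i \<in> cube_nbhd F"
  obtains K where "F \<subseteq> condition K i"
proof -
  have "finite F \<Longrightarrow> F \<subseteq> {m. solution i m} \<Longrightarrow> \<exists>K. F \<subseteq> condition K i"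
  proof (induction F rule: finite_induct)
    case (insert m F)
    then obtain K k where "F \<subseteq> condition K i" "m \<in> condition k i"
      unfolding solution_def by auto
    then have "insert m F \<subseteq> condition (max K k) i"
      using condition_mono[of K "max K k" i] condition_mono[of k "max K k" i] by auto
    then show ?case by blast
  qed simp
  moreover have "F \<subseteq> {m. solution i m}"
    using assms(2) by (auto simp: cube_nbhd_def)
  ultimately show thesis using assms(1) that by blast
qed

lemma solution_meets_requirement:
  assumes R: "R r = (s, c, S, c', S')" and "solution c \<in> S"
  shows "solution c' \<in> S'"
proof -
  have S: "openin sierpinski_cube S" and S': "openin sierpinski_cube S'"
    using requirement_open[OF R] by auto
  obtain F where F: "finite F" "solution c \<in> cube_nbhd F" "cube_nbhd F \<subseteq> S"
    using sierpinski_cube_open_basis[OF S assms(2)] by metis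
  obtain K where K: "F \<subseteq> condition K c"
    using finite_solution_support[OF F(1,2)] by blast
  \<comment> \<open>requirement r is handled at every stage k with first component r; take one late enough\<close>
  define k where "k = prod_encode (r, K + s + c + c')"
  have "K + s + c + c' \<le> k" unfolding k_def by (rule le_prod_encode_2)
  have Rk: "R (fst (prod_decode k)) = (s, c, S, c', S')" unfolding k_def using R by simp
  have "F \<subseteq> condition k c"
    using K condition_mono[of K k c] \<open>K + s + c + c' \<le> k\<close> by auto
  then have "(\<lambda>m. m \<in> condition k c) \<in> S"
    using F(3) by (auto simp: cube_nbhd_def)
  then have trig: "triggered k (condition k)"
    unfolding triggered_def Rk using \<open>K + s + c + c' \<le> k\<close> by simp
  have "target k = c'" unfolding target_def Rk by simp
  then have "response k (condition k) \<subseteq> condition (Suc k) c'"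
    unfolding condition_Suc extend_def using trig by simp
  moreover have "(\<lambda>m. m \<in> response k (condition k)) \<in> S'"
    using response_spec[OF realized_condition trig Rk] by blast
  ultimately show ?thesis
    using sierpinski_cube_open_upclosed[OF S', of "\<lambda>m. m \<in> response k (condition k)" "solution c'"]
    unfolding solution_def by blast
qed

lemma solution_nbhd_realized:
  assumes "finite F" "solution i \<in> cube_nbhd F"
  shows "\<exists>k\<ge>j. \<exists>y\<in>W k. e i y \<in> cube_nbhd F"
proof -
  obtain K where "F \<subseteq> condition K i"
    using finite_solution_support[OF assms] by blast
  then have "F \<subseteq> condition (max K j) i"
    using condition_mono[of K "max K j" i] by auto
  moreover obtain y where "y \<in> W (max K j)" "e i y \<in> cube_nbhd (condition (max K j) i)"
    using realized_condition[of "max K j"] unfolding realized_def by blast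
  ultimately have "e i y \<in> cube_nbhd F"
    by (auto simp: cube_nbhd_def)
  then show ?thesis using \<open>y \<in> W (max K j)\<close> by (metis max.cobounded2)
qed

end

definition join_topology :: "(nat \<Rightarrow> 'a topology) \<Rightarrow> 'a topology" where
  "join_topology \<tau> = topology_generated_by (\<Union>i. {U. openin (\<tau> i) U})"

locale saturated_chain =
  fixes X :: "'a set" and E :: "('a \<times> 'a) set" and \<tau> :: "nat \<Rightarrow> 'a topology"
  assumes equiv: "equiv X E"
    and topspace_eq: "\<And>i. topspace (\<tau> i) = X"
    and openin_Suc: "\<And>i U. openin (\<tau> i) U \<Longrightarrow> openin (\<tau> (Suc i)) U"
    and openin_saturation: "\<And>i U. openin (\<tau> i) U \<Longrightarrow> openin (\<tau> i) (E `` U)"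
begin

lemma E_subset: "E \<subseteq> X \<times> X"
  and E_sym: "(x, y) \<in> E \<Longrightarrow> (y, x) \<in> E"
  and E_refl: "x \<in> X \<Longrightarrow> (x, x) \<in> E"
  using equiv unfolding equiv_def refl_on_def sym_def by auto

lemma openin_mono: "i \<le> j \<Longrightarrow> openin (\<tau> i) U \<Longrightarrow> openin (\<tau> j) U"
  by (induction j rule: dec_induct) (auto intro: openin_Suc)

lemma sat_indist_mono: "i \<le> j \<Longrightarrow> sat_indist (\<tau> j) E x y \<Longrightarrow> sat_indist (\<tau> i) E x y"
  by (rule sat_indist_coarser) (auto intro: openin_mono)

lemma topspace_join: "topspace (join_topology \<tau>) = X"
proof -
  have "\<Union>(\<Union>i. {U. openin (\<tau> i) U}) = X"
    using openin_subset openin_topspace topspace_eq by blast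
  then show ?thesis by (simp add: join_topology_def)
qed

lemma openin_join: "openin (\<tau> i) U \<Longrightarrow> openin (join_topology \<tau>) U"
  unfolding join_topology_def openin_topology_generated_by_iff
  by (rule generate_topology_on.Basis) blast

lemma openin_join_locally:
  assumes "openin (join_topology \<tau>) W" "w \<in> W"
  shows "\<exists>i U. openin (\<tau> i) U \<and> w \<in> U \<and> U \<subseteq> W"
proof -
  have "generate_topology_on (\<Union>i. {U. openin (\<tau> i) U}) W"
    using assms(1) unfolding join_topology_def openin_topology_generated_by_iff .
  then have "\<forall>w\<in>W. \<exists>i U. openin (\<tau> i) U \<and> w \<in> U \<and> U \<subseteq> W"
  proof (induction rule: generate_topology_on.induct)
    case (Int a b)
    show ?case
    proof
      fix w assume "w \<in> a \<inter> b"
      then obtain i Ua j Ub where "openin (\<tau> i) Ua" "w \<in> Ua" "Ua \<subseteq> a"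
          and "openin (\<tau> j) Ub" "w \<in> Ub" "Ub \<subseteq> b"
        using Int.IH by (meson IntD1 IntD2)
      moreover have "openin (\<tau> (max i j)) (Ua \<inter> Ub)"
        using calculation by (intro openin_Int openin_mono[of _ "max i j"]) auto
      ultimately show "\<exists>i U. openin (\<tau> i) U \<and> w \<in> U \<and> U \<subseteq> a \<inter> b" by blast
    qed
  next
    case (UN K)
    then show ?case by (meson UnionE Union_upper order_trans)
  qed auto
  then show ?thesis using assms(2) by blast
qed

lemma equiv_join: "equiv (topspace (join_topology \<tau>)) E"
  and equiv_tau: "equiv (topspace (\<tau> i)) E"
  using equiv by (simp_all add: topspace_join topspace_eq)

lemma sat_indist_join_iff: "sat_indist (join_topology \<tau>) E x y \<longleftrightarrow> (\<forall>i. sat_indist (\<tau> i) E x y)"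
proof
  assume "sat_indist (join_topology \<tau>) E x y"
  then show "\<forall>i. sat_indist (\<tau> i) E x y"
    using openin_join by (blast intro: sat_indist_coarser)
next
  have in_saturation: "b \<in> E `` W"
    if ab: "\<forall>i. sat_indist (\<tau> i) E a b" and a: "a \<in> E `` W" and W: "openin (join_topology \<tau>) W"
    for a b W
  proof -
    obtain w where w: "w \<in> W" "(w, a) \<in> E" using a by auto
    obtain i U where U: "openin (\<tau> i) U" "w \<in> U" "U \<subseteq> W"
      using openin_join_locally[OF W w(1)] by blast
    have "a \<in> E `` U" using w U by auto
    then have "b \<in> E `` U" using ab U(1) unfolding sat_indist_def by blast
    then show ?thesis using U(3) by auto
  qed
  assume xy: "\<forall>i. sat_indist (\<tau> i) E x y"
  then have yx: "\<forall>i. sat_indist (\<tau> i) E y x" by (blast intro: sat_indist_sym)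
  show "sat_indist (join_topology \<tau>) E x y"
    unfolding sat_indist_def
  proof (intro allI impI iffI)
    fix W assume "openin (join_topology \<tau>) W"
    then show "x \<in> E `` W \<Longrightarrow> y \<in> E `` W" and "y \<in> E `` W \<Longrightarrow> x \<in> E `` W"
      using in_saturation[OF xy] in_saturation[OF yx] by blast+
  qed
qed

definition limit_map :: "'a set \<Rightarrow> nat \<Rightarrow> 'a set" where
  "limit_map C = (\<lambda>i. approx_class (\<tau> i) E (SOME x. x \<in> C))"

lemma limit_map_approx_class:
  assumes "x \<in> X"
  shows "limit_map (approx_class (join_topology \<tau>) E x) = (\<lambda>i. approx_class (\<tau> i) E x)"
  unfolding limit_map_def
  using approx_class_some_member[OF equiv_tau _ openin_join] assms
  by (simp add: topspace_join topspace_eq)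

end

locale coherent_chain = saturated_chain +
  fixes emb :: "nat \<Rightarrow> 'a \<Rightarrow> nat \<Rightarrow> bool" and U V :: "nat \<Rightarrow> nat \<Rightarrow> (nat \<Rightarrow> bool) set"
    and xs :: "nat \<Rightarrow> 'a"
  assumes embedding: "\<And>i. cube_pi02_embedding (\<tau> i) (emb i) (U i) (V i)"
    and xs_in: "\<And>i. xs i \<in> X"
    and xs_coherent: "\<And>i. sat_indist (\<tau> i) E (xs (Suc i)) (xs i)"
begin

lemma inj_on_emb: "inj_on (emb i) X"
  and openin_U: "openin sierpinski_cube (U i n)"
  and openin_V: "openin sierpinski_cube (V i n)"
  and emb_image_iff: "f \<in> emb i ` X \<longleftrightarrow> (\<forall>n. f \<in> U i n \<longrightarrow> f \<in> V i n)"
  and openin_emb_preimage: "openin sierpinski_cube Ob \<Longrightarrow> openin (\<tau> i) {y \<in> X. emb i y \<in> Ob}"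
  using embedding[of i] by (simp_all add: cube_pi02_embedding_def topspace_eq)

lemma openin_imp_emb_preimage:
  "openin (\<tau> i) W \<Longrightarrow> \<exists>Ob. openin sierpinski_cube Ob \<and> W = {y \<in> X. emb i y \<in> Ob}"
  using embedding[of i] by (simp add: cube_pi02_embedding_def topspace_eq)

lemma openin_finite_conditions:
  assumes "\<And>i. finite (G i)" "n \<le> k"
  shows "openin (\<tau> k) {z \<in> X. \<forall>i\<le>n. emb i z \<in> cube_nbhd (G i)}"
  using assms(2)
proof (induction n)
  case 0
  then show ?case
    using openin_mono[OF le0 openin_emb_preimage[OF openin_cube_nbhd[OF assms(1)]]] by simp
next
  case (Suc n)
  have "{z \<in> X. \<forall>i\<le>Suc n. emb i z \<in> cube_nbhd (G i)} =
      {z \<in> X. \<forall>i\<le>n. emb i z \<in> cube_nbhd (G i)} \<inter> {z \<in> X. emb (Suc n) z \<in> cube_nbhd (G (Suc n))}"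
    by (auto simp: le_Suc_eq)
  moreover have "openin (\<tau> k) {z \<in> X. emb (Suc n) z \<in> cube_nbhd (G (Suc n))}"
    using openin_mono[OF Suc.prems openin_emb_preimage[OF openin_cube_nbhd[OF assms(1)]]] .
  ultimately show ?case using Suc by (simp add: openin_Int)
qed

definition fibre :: "nat \<Rightarrow> 'a set" where
  "fibre k = E `` {xs k}"

lemma fibre_subset: "fibre k \<subseteq> X"
  using E_subset by (auto simp: fibre_def)

lemma sat_indist_xs: "i \<le> k \<Longrightarrow> sat_indist (\<tau> i) E (xs k) (xs i)"
proof (induction k rule: dec_induct)
  case base
  then show ?case by (rule sat_indist_refl)
next
  case (step k)
  then show ?case
    using sat_indist_trans[OF sat_indist_mono[OF step(1) xs_coherent[of k]]] by blast
qed

lemma fibre_sat_indist: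
  assumes "y \<in> fibre k" "i \<le> k"
  shows "sat_indist (\<tau> i) E y (xs i)"
proof -
  have "(y, xs k) \<in> E" using assms(1) E_sym by (auto simp: fibre_def)
  then show ?thesis
    by (rule sat_indist_trans[OF sat_indist_if_related[OF equiv] sat_indist_xs[OF assms(2)]])
qed

lemma fibre_Suc_dense:
  assumes "\<And>i. finite (G i)" "\<And>i. k < i \<Longrightarrow> G i = {}" "y \<in> fibre k"
    "\<And>i. emb i y \<in> cube_nbhd (G i)"
  shows "\<exists>y'\<in>fibre (Suc k). \<forall>i. emb i y' \<in> cube_nbhd (G i)"
proof -
  define B where "B = {z \<in> X. \<forall>i\<le>k. emb i z \<in> cube_nbhd (G i)}"
  have B_eq: "B = {z \<in> X. \<forall>i. emb i z \<in> cube_nbhd (G i)}"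
    unfolding B_def using assms(2) by (auto simp: cube_nbhd_def) (metis empty_iff not_le)
  have "openin (\<tau> k) B"
    unfolding B_def using openin_finite_conditions[OF assms(1) order_refl] .
  \<comment> \<open>y \<in> B and xs (Suc k) is \<tau> k-indistinguishable from y, so it meets the saturation of B\<close>
  moreover have "y \<in> E `` B"
    using assms(3,4) fibre_subset E_refl unfolding B_eq by blast
  moreover have "sat_indist (\<tau> k) E y (xs (Suc k))"
    by (rule sat_indist_trans[OF fibre_sat_indist[OF assms(3) order_refl] sat_indist_sym[OF xs_coherent]])
  ultimately have "xs (Suc k) \<in> E `` B" unfolding sat_indist_def by blast
  then show ?thesis unfolding B_eq fibre_def using E_sym by blast
qed

definition basic :: "nat \<Rightarrow> nat \<Rightarrow> 'a set" where
  "basic i n = {y \<in> X. emb i y \<in> cube_nbhd (set_decode n)}"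

lemma openin_basic: "openin (\<tau> i) (basic i n)"
  unfolding basic_def by (rule openin_emb_preimage[OF openin_cube_nbhd]) simp

definition shift_code :: "nat \<Rightarrow> nat \<Rightarrow> (nat \<Rightarrow> bool) set" where
  "shift_code i n = (SOME Ob. openin sierpinski_cube Ob \<and>
     {y \<in> X. emb i y \<in> cube_nbhd {n}} = {y \<in> X. emb (Suc i) y \<in> Ob})"

lemma shift_code: "openin sierpinski_cube (shift_code i n) \<and>
    {y \<in> X. emb i y \<in> cube_nbhd {n}} = {y \<in> X. emb (Suc i) y \<in> shift_code i n}"
proof -
  have "openin (\<tau> (Suc i)) {y \<in> X. emb i y \<in> cube_nbhd {n}}"
    by (intro openin_Suc openin_emb_preimage openin_cube_nbhd) simp
  then show ?thesis
    unfolding shift_code_def by (rule someI_ex[OF openin_imp_emb_preimage])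
qed

definition saturation_code :: "nat \<Rightarrow> nat \<Rightarrow> (nat \<Rightarrow> bool) set" where
  "saturation_code i n = (SOME Ob. openin sierpinski_cube Ob \<and>
     E `` basic i n = {y \<in> X. emb i y \<in> Ob})"

lemma saturation_code: "openin sierpinski_cube (saturation_code i n) \<and>
    E `` basic i n = {y \<in> X. emb i y \<in> saturation_code i n}"
  unfolding saturation_code_def
  by (rule someI_ex[OF openin_imp_emb_preimage[OF openin_saturation[OF openin_basic]]])

text \<open>The four kinds of requirements on the codes solution i, meant to be emb i x for the sought
  point x: solution i satisfies the i-th Pi^0_2 condition, so it codes a point; solution i and
  solution (Suc i) code the same point (two kinds, one for each direction); and from stage i on,
  solution i lies in the saturation of every basic open of \<tau> i whose saturation contains xs i.\<close>
definition requirement :: "nat \<Rightarrow> nat \<times> nat \<times> (nat \<Rightarrow> bool) set \<times> nat \<times> (nat \<Rightarrow> bool) set" where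
  "requirement r = (case prod_decode (r div 4) of (i, n) \<Rightarrow>
      if r mod 4 = 0 then (0, i, U i n, i, V i n)
      else if r mod 4 = 1 then (0, i, cube_nbhd {n}, Suc i, shift_code i n)
      else if r mod 4 = 2 then (0, Suc i, shift_code i n, i, cube_nbhd {n})
      else (i, i, if xs i \<in> E `` basic i n then UNIV else {}, i, saturation_code i n))"

lemma requirement_open:
  assumes "requirement r = (s, c, S, c', S')"
  shows "openin sierpinski_cube S \<and> openin sierpinski_cube S'"
proof -
  obtain i n where "prod_decode (r div 4) = (i, n)" by fastforce
  moreover have "openin sierpinski_cube (UNIV :: (nat \<Rightarrow> bool) set)"
    by (metis topspace_sierpinski_cube openin_topspace)
  moreover have "openin sierpinski_cube (cube_nbhd {n})" by (simp add: openin_cube_nbhd)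
  ultimately show ?thesis
    using assms openin_U[of i n] openin_V[of i n] shift_code[of i n] saturation_code[of i n]
    by (auto simp: requirement_def split: if_splits)
qed

lemma requirement_valid:
  assumes R: "requirement r = (s, c, S, c', S')" and "s \<le> k" "y \<in> fibre k" "emb c y \<in> S"
  shows "emb c' y \<in> S'"
proof -
  obtain i n where d: "prod_decode (r div 4) = (i, n)" by fastforce
  have y: "y \<in> X" using assms(3) fibre_subset by blast
  consider "r mod 4 = 0" | "r mod 4 = 1" | "r mod 4 = 2" | "r mod 4 = 3" by linarith
  then show ?thesis
  proof cases
    case 1
    then show ?thesis using R d assms(4) y emb_image_iff by (auto simp: requirement_def)
  next
    case 2
    then show ?thesis using R d assms(4) y shift_code[of i n] by (auto simp: requirement_def)
  next
    case 3
    then show ?thesis using R d assms(4) y shift_code[of i n] by (auto simp: requirement_def)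
  next
    case 4
    then have r: "s = i" "c = i" "c' = i" "S' = saturation_code i n" "xs i \<in> E `` basic i n"
      using R d assms(4) by (auto simp: requirement_def split: if_splits)
    have "sat_indist (\<tau> i) E y (xs i)"
      using fibre_sat_indist[OF assms(3)] assms(2) r(1) by simp
    then have "y \<in> E `` basic i n"
      using r(5) openin_basic unfolding sat_indist_def by blast
    then show ?thesis using saturation_code[of i n] r by auto
  qed
qed

sublocale cube_requirements fibre emb requirement
proof
  show "fibre 0 \<noteq> {}" using E_refl[OF xs_in] by (auto simp: fibre_def)
qed (fact fibre_Suc_dense requirement_open requirement_valid)+

end

context coherent_chain
begin

lemma requirement_encode:
  "requirement (4 * prod_encode (i, n)) = (0, i, U i n, i, V i n)"
  "requirement (4 * prod_encode (i, n) + 1) = (0, i, cube_nbhd {n}, Suc i, shift_code i n)"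
  "requirement (4 * prod_encode (i, n) + 2) = (0, Suc i, shift_code i n, i, cube_nbhd {n})"
  "requirement (4 * prod_encode (i, n) + 3) =
     (i, i, if xs i \<in> E `` basic i n then UNIV else {}, i, saturation_code i n)"
proof -
  have "Suc (4 * p) div 4 = p" "Suc (4 * p) mod 4 = 1"
    "Suc (Suc (4 * p)) div 4 = p" "Suc (Suc (4 * p)) mod 4 = 2"
    "Suc (Suc (Suc (4 * p))) div 4 = p" "Suc (Suc (Suc (4 * p))) mod 4 = 3" for p :: nat
    by presburger+
  then show "requirement (4 * prod_encode (i, n)) = (0, i, U i n, i, V i n)"
    "requirement (4 * prod_encode (i, n) + 1) = (0, i, cube_nbhd {n}, Suc i, shift_code i n)"
    "requirement (4 * prod_encode (i, n) + 2) = (0, Suc i, shift_code i n, i, cube_nbhd {n})"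
    "requirement (4 * prod_encode (i, n) + 3) =
       (i, i, if xs i \<in> E `` basic i n then UNIV else {}, i, saturation_code i n)"
    by (simp_all add: requirement_def)
qed

lemma solution_in_image: "solution i \<in> emb i ` X"
  using solution_meets_requirement[OF requirement_encode(1)] by (simp add: emb_image_iff)

definition point :: "nat \<Rightarrow> 'a" where
  "point i = inv_into X (emb i) (solution i)"

lemma point_in: "point i \<in> X"
  and emb_point: "emb i (point i) = solution i"
  using solution_in_image by (simp_all add: point_def inv_into_into f_inv_into_f)

lemma point_Suc: "point (Suc i) = point i"
proof -
  have "emb i (point (Suc i)) \<in> cube_nbhd {n} \<longleftrightarrow> emb i (point i) \<in> cube_nbhd {n}" for n
  proof -
    have "emb i (point (Suc i)) \<in> cube_nbhd {n} \<longleftrightarrow> solution (Suc i) \<in> shift_code i n"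
      using shift_code[of i n, THEN conjunct2, THEN eqset_imp_iff, of "point (Suc i)"]
        point_in[of "Suc i"] emb_point[of "Suc i"] by simp
    also have "\<dots> \<longleftrightarrow> solution i \<in> cube_nbhd {n}"
      using solution_meets_requirement[OF requirement_encode(2)]
        solution_meets_requirement[OF requirement_encode(3)] by blast
    finally show ?thesis by (simp add: emb_point)
  qed
  then have "emb i (point (Suc i)) = emb i (point i)"
    by (auto simp: cube_nbhd_def fun_eq_iff)
  then show ?thesis
    using inj_on_emb[of i] point_in by (meson inj_onD)
qed

lemma point_eq_point_0: "point i = point 0"
  by (induction i) (simp_all add: point_Suc)

lemma xs_in_saturation_if_point:
  assumes W: "openin (\<tau> i) W" and "point 0 \<in> E `` W"
  shows "xs i \<in> E `` W"
proof -
  obtain Ob where Ob: "openin sierpinski_cube Ob" "E `` W = {y \<in> X. emb i y \<in> Ob}"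
    using openin_imp_emb_preimage[OF openin_saturation[OF W]] by blast
  then have "solution i \<in> Ob"
    using assms(2) point_eq_point_0[of i] emb_point[of i] by auto
  then obtain F where F: "finite F" "solution i \<in> cube_nbhd F" "cube_nbhd F \<subseteq> Ob"
    using sierpinski_cube_open_basis[OF Ob(1)] by metis
  obtain k y where "k \<ge> i" "y \<in> fibre k" "emb i y \<in> cube_nbhd F"
    using solution_nbhd_realized[OF F(1,2)] by blast
  moreover have "y \<in> X" using \<open>y \<in> fibre k\<close> fibre_subset by blast
  ultimately have "y \<in> E `` W" "sat_indist (\<tau> i) E y (xs i)"
    using Ob(2) F(3) fibre_sat_indist by auto
  then show "xs i \<in> E `` W" using W unfolding sat_indist_def by blast
qed

lemma point_in_saturation_if_xs:
  assumes W: "openin (\<tau> i) W" and "xs i \<in> E `` W"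
  shows "point 0 \<in> E `` W"
proof -
  obtain w where w: "w \<in> W" "(w, xs i) \<in> E" using assms(2) by auto
  obtain Ob where Ob: "openin sierpinski_cube Ob" "W = {y \<in> X. emb i y \<in> Ob}"
    using openin_imp_emb_preimage[OF W] by blast
  then obtain F where F: "finite F" "emb i w \<in> cube_nbhd F" "cube_nbhd F \<subseteq> Ob"
    using sierpinski_cube_open_basis[OF Ob(1)] w(1) by (metis (no_types, lifting) mem_Collect_eq)
  define n where "n = set_encode F"
  have "basic i n \<subseteq> W" "w \<in> basic i n"
    using Ob(2) F w(1) by (auto simp: basic_def n_def)
  then have "xs i \<in> E `` basic i n" using w(2) by auto
  then have "solution i \<in> saturation_code i n"
    using solution_meets_requirement[OF requirement_encode(4)] by simp
  then have "point 0 \<in> E `` basic i n"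
    using saturation_code[of i n] point_in point_eq_point_0[of i] emb_point[of i] by auto
  then show "point 0 \<in> E `` W" using \<open>basic i n \<subseteq> W\<close> by auto
qed

lemma sat_indist_point_xs: "sat_indist (\<tau> i) E (point 0) (xs i)"
  unfolding sat_indist_def
  by (intro allI impI iffI) (simp_all add: xs_in_saturation_if_point point_in_saturation_if_xs)

end

locale quasi_polish_chain = saturated_chain +
  assumes quasi_polish: "\<And>i. quasi_polish (\<tau> i)"
begin

lemma coherent_sequence_limit:
  assumes "\<And>i. xs i \<in> X" "\<And>i. sat_indist (\<tau> i) E (xs (Suc i)) (xs i)"
  obtains x where "x \<in> X" "\<And>i. sat_indist (\<tau> i) E x (xs i)"
proof -
  have "\<forall>i. \<exists>t. cube_pi02_embedding (\<tau> i) (fst t) (fst (snd t)) (snd (snd t))"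
    using quasi_polish_cube_pi02_embedding[OF quasi_polish] by (metis fst_conv snd_conv)
  then obtain t where "\<And>i. cube_pi02_embedding (\<tau> i) (fst (t i)) (fst (snd (t i))) (snd (snd (t i)))"
    by metis
  then interpret coherent_chain X E \<tau> "\<lambda>i. fst (t i)" "\<lambda>i. fst (snd (t i))" "\<lambda>i. snd (snd (t i))" xs
    using assms by unfold_locales
  show thesis using that point_in sat_indist_point_xs .
qed

end

context saturated_chain
begin

lemma topspace_join_quotient:
  "topspace (sep_quotient (join_topology \<tau>) E) = approx_class (join_topology \<tau>) E ` X"
  by (simp add: topspace_sep_quotient approx_classes_def topspace_join)

lemma approx_class_seq_in_limit:
  assumes "x \<in> X"
  shows "(\<lambda>i. approx_class (\<tau> i) E x) \<in> topspace (sep_quotient_limit \<tau> E)"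
  unfolding topspace_sep_quotient_limit
proof (intro conjI allI ballI impI)
  show "approx_class (\<tau> i) E x \<in> approx_classes (\<tau> i) E" for i
    using assms by (simp add: approx_classes_def topspace_eq)
next
  fix i y assume "y \<in> topspace (\<tau> (Suc i))"
    and "approx_class (\<tau> (Suc i)) E x = approx_class (\<tau> (Suc i)) E y"
  then have "sat_indist (\<tau> (Suc i)) E x y"
    using assms by (simp add: approx_class_eq_iff[OF equiv_tau] topspace_eq)
  then have "sat_indist (\<tau> i) E x y" by (rule sat_indist_mono[rotated]) simp
  then show "approx_class (\<tau> i) E x = approx_class (\<tau> i) E y"
    using assms by (simp add: approx_class_eq_iff[OF equiv_tau] topspace_eq)
qed

lemma limit_representatives:
  assumes "s \<in> topspace (sep_quotient_limit \<tau> E)"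
  obtains xs where "\<And>i. xs i \<in> X" "\<And>i. s i = approx_class (\<tau> i) E (xs i)"
    "\<And>i. sat_indist (\<tau> i) E (xs (Suc i)) (xs i)"
proof -
  note s = assms[unfolded topspace_sep_quotient_limit]
  have "s i \<in> approx_class (\<tau> i) E ` X" for i
    using s[THEN conjunct1] by (simp add: approx_classes_def topspace_eq)
  then have "\<forall>i. \<exists>x. x \<in> X \<and> s i = approx_class (\<tau> i) E x" by blast
  from choice[OF this] obtain xs where "\<forall>i. xs i \<in> X \<and> s i = approx_class (\<tau> i) E (xs i)" ..
  then have xs: "\<And>i. xs i \<in> X" "\<And>i. s i = approx_class (\<tau> i) E (xs i)" by auto
  have coherent: "s i = approx_class (\<tau> i) E x"
    if "x \<in> X" "s (Suc i) = approx_class (\<tau> (Suc i)) E x" for i x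
    using s[THEN conjunct2] that topspace_eq by blast
  have "sat_indist (\<tau> i) E (xs (Suc i)) (xs i)" for i
  proof -
    have "s i = approx_class (\<tau> i) E (xs (Suc i))"
      by (rule coherent[OF xs(1) xs(2)])
    then have "sat_indist (\<tau> i) E (xs i) (xs (Suc i))"
      using xs by (simp add: approx_class_eq_iff[OF equiv_tau] topspace_eq)
    then show ?thesis by (rule sat_indist_sym)
  qed
  with xs show thesis by (rule that)
qed

lemma inj_on_limit_map: "inj_on limit_map (topspace (sep_quotient (join_topology \<tau>) E))"
proof (rule inj_onI)
  fix C D assume "C \<in> topspace (sep_quotient (join_topology \<tau>) E)"
    "D \<in> topspace (sep_quotient (join_topology \<tau>) E)" and eq: "limit_map C = limit_map D"
  then obtain x y where x: "x \<in> X" "C = approx_class (join_topology \<tau>) E x"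
    and y: "y \<in> X" "D = approx_class (join_topology \<tau>) E y"
    unfolding topspace_join_quotient by blast
  have "approx_class (\<tau> i) E x = approx_class (\<tau> i) E y" for i
    using eq unfolding x(2) y(2) limit_map_approx_class[OF x(1)] limit_map_approx_class[OF y(1)]
    by (rule fun_cong)
  then have "sat_indist (\<tau> i) E x y" for i
    using x(1) by (simp add: approx_class_eq_iff[OF equiv_tau] topspace_eq)
  then show "C = D"
    unfolding x(2) y(2) using x(1)
    by (simp add: approx_class_eq_iff[OF equiv_join] sat_indist_join_iff topspace_join)
qed

lemma continuous_map_limit_map:
  "continuous_map (sep_quotient (join_topology \<tau>) E) (sep_quotient_limit \<tau> E) limit_map"
  unfolding sep_quotient_limit_def continuous_map_in_subtopology
proof (intro conjI)
  show "continuous_map (sep_quotient (join_topology \<tau>) E)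
      (product_topology (\<lambda>i. sep_quotient (\<tau> i) E) UNIV) limit_map"
    unfolding continuous_map_componentwise_UNIV limit_map_def
    using continuous_map_sep_quotient_coarser[OF equiv_tau _ openin_join]
    by (simp add: topspace_join topspace_eq)
  show "limit_map \<in> topspace (sep_quotient (join_topology \<tau>) E) \<rightarrow>
      {s. \<forall>i. \<forall>x\<in>topspace (\<tau> (Suc i)). s (Suc i) = approx_class (\<tau> (Suc i)) E x \<longrightarrow>
        s i = approx_class (\<tau> i) E x}"
  proof
    fix C assume "C \<in> topspace (sep_quotient (join_topology \<tau>) E)"
    then obtain x where "x \<in> X" "C = approx_class (join_topology \<tau>) E x"
      by (auto simp: topspace_join_quotient)
    then have "limit_map C \<in> topspace (sep_quotient_limit \<tau> E)"
      by (simp add: approx_class_seq_in_limit limit_map_approx_class)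
    then show "limit_map C \<in> {s. \<forall>i. \<forall>x\<in>topspace (\<tau> (Suc i)).
        s (Suc i) = approx_class (\<tau> (Suc i)) E x \<longrightarrow> s i = approx_class (\<tau> i) E x}"
      unfolding topspace_sep_quotient_limit by blast
  qed
qed

end

context quasi_polish_chain
begin

lemma limit_map_image:
  "limit_map ` topspace (sep_quotient (join_topology \<tau>) E) = topspace (sep_quotient_limit \<tau> E)"
proof
  show "limit_map ` topspace (sep_quotient (join_topology \<tau>) E) \<subseteq> topspace (sep_quotient_limit \<tau> E)"
    by (auto simp: topspace_join_quotient limit_map_approx_class approx_class_seq_in_limit)
next
  show "topspace (sep_quotient_limit \<tau> E) \<subseteq> limit_map ` topspace (sep_quotient (join_topology \<tau>) E)"
  proof
    fix s assume "s \<in> topspace (sep_quotient_limit \<tau> E)"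
    then obtain xs where xs: "\<And>i. xs i \<in> X" "\<And>i. s i = approx_class (\<tau> i) E (xs i)"
      "\<And>i. sat_indist (\<tau> i) E (xs (Suc i)) (xs i)"
      by (rule limit_representatives) blast
    obtain x where x: "x \<in> X" "\<And>i. sat_indist (\<tau> i) E x (xs i)"
      using coherent_sequence_limit[OF xs(1,3)] by blast
    have "sat_indist (\<tau> i) E (xs i) x" for i using x(2) by (rule sat_indist_sym)
    with x(1) have "s = limit_map (approx_class (join_topology \<tau>) E x)"
      by (simp add: limit_map_approx_class fun_eq_iff xs(1,2) approx_class_eq_iff[OF equiv_tau] topspace_eq)
    then show "s \<in> limit_map ` topspace (sep_quotient (join_topology \<tau>) E)"
      using \<open>x \<in> X\<close> by (simp add: topspace_join_quotient)
  qed
qed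

lemma limit_map_image_nbhd:
  assumes Wq: "openin (sep_quotient (join_topology \<tau>) E) Wq"
    and "x \<in> X" "approx_class (join_topology \<tau>) E x \<in> Wq"
  shows "\<exists>T. openin (sep_quotient_limit \<tau> E) T \<and> (\<lambda>i. approx_class (\<tau> i) E x) \<in> T \<and>
    T \<subseteq> limit_map ` Wq"
proof -
  define P where "P = {x \<in> X. approx_class (join_topology \<tau>) E x \<in> Wq}"
  have "openin (join_topology \<tau>) P"
    using Wq by (simp add: openin_sep_quotient P_def topspace_join)
  moreover have "x \<in> P" using assms(2,3) by (simp add: P_def)
  ultimately obtain i U where U: "openin (\<tau> i) U" "x \<in> U" "U \<subseteq> P"
    by (metis openin_join_locally)
  have "E `` U \<subseteq> E `` P" by (rule Image_mono[OF order_refl U(3)])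
  also have "\<dots> \<subseteq> P"
    using approx_class_preimage_saturated[OF equiv_join, of Wq] by (simp add: P_def topspace_join)
  finally have "E `` U \<subseteq> P" .
  define Q where "Q = approx_class (\<tau> i) E ` (E `` U)"
  have Q: "openin (sep_quotient (\<tau> i) E) Q"
    unfolding Q_def by (rule openin_sep_quotient_image[OF equiv_tau openin_saturation[OF U(1)]])
  define T where "T = {t \<in> topspace (sep_quotient_limit \<tau> E). t i \<in> Q}"
  have "openin (sep_quotient_limit \<tau> E) T"
    unfolding T_def using Q by (rule openin_sep_quotient_limit_coordinate)
  moreover have "(\<lambda>i. approx_class (\<tau> i) E x) \<in> T"
    using approx_class_seq_in_limit[OF \<open>x \<in> X\<close>] U(2) E_refl[OF \<open>x \<in> X\<close>]
    unfolding T_def Q_def by blast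
  moreover have "T \<subseteq> limit_map ` Wq"
  proof
    fix t assume "t \<in> T"
    then have "t \<in> limit_map ` topspace (sep_quotient (join_topology \<tau>) E)"
      unfolding limit_map_image T_def by blast
    then obtain y where "y \<in> X" and t: "t = limit_map (approx_class (join_topology \<tau>) E y)"
      by (auto simp: topspace_join_quotient)
    then have "y \<in> {y \<in> topspace (\<tau> i). approx_class (\<tau> i) E y \<in> Q}"
      using \<open>t \<in> T\<close> by (simp add: T_def limit_map_approx_class topspace_eq)
    then have "y \<in> E `` U"
      unfolding Q_def approx_class_preimage_image[OF equiv_tau openin_saturation[OF U(1)]] .
    then have "approx_class (join_topology \<tau>) E y \<in> Wq"
      using \<open>E `` U \<subseteq> P\<close> by (auto simp: P_def)
    then show "t \<in> limit_map ` Wq" using t by blast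
  qed
  ultimately show ?thesis by blast
qed

lemma open_map_limit_map:
  "open_map (sep_quotient (join_topology \<tau>) E) (sep_quotient_limit \<tau> E) limit_map"
  unfolding open_map_def
proof (intro allI impI)
  fix Wq assume Wq: "openin (sep_quotient (join_topology \<tau>) E) Wq"
  have "Wq \<subseteq> approx_class (join_topology \<tau>) E ` X"
    using Wq by (simp add: openin_sep_quotient approx_classes_def topspace_join)
  show "openin (sep_quotient_limit \<tau> E) (limit_map ` Wq)"
    unfolding openin_subopen[of _ "limit_map ` Wq"]
  proof
    fix t assume "t \<in> limit_map ` Wq"
    with \<open>Wq \<subseteq> approx_class (join_topology \<tau>) E ` X\<close> obtain x
      where "x \<in> X" "approx_class (join_topology \<tau>) E x \<in> Wq"
        and "t = limit_map (approx_class (join_topology \<tau>) E x)"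
      by blast
    then show "\<exists>T. openin (sep_quotient_limit \<tau> E) T \<and> t \<in> T \<and> T \<subseteq> limit_map ` Wq"
      using limit_map_image_nbhd[OF Wq] by (simp add: limit_map_approx_class)
  qed
qed

lemma homeomorphic_map_limit_map:
  "homeomorphic_map (sep_quotient (join_topology \<tau>) E) (sep_quotient_limit \<tau> E) limit_map"
  using continuous_map_limit_map open_map_limit_map limit_map_image inj_on_limit_map
  by (rule bijective_open_imp_homeomorphic_map)

end

theorem lemma2p5:
  fixes X :: "'a set" and E :: "('a \<times> 'a) set" and \<tau> :: "nat \<Rightarrow> 'a topology"
  assumes "equiv X E"
    and "\<And>i. topspace (\<tau> i) = X"
    and "\<And>i. quasi_polish (\<tau> i)"
    and "\<And>i U. openin (\<tau> i) U \<Longrightarrow> openin (\<tau> (Suc i)) U"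
    and "\<And>i U. openin (\<tau> i) U \<Longrightarrow> openin (\<tau> i) (saturation E U)"
  defines "\<tau>\<^sub>\<omega> \<equiv> topology_generated_by (\<Union>i. {U. openin (\<tau> i) U})"
  shows "homeomorphic_map (sep_quotient \<tau>\<^sub>\<omega> E) (sep_quotient_limit \<tau> E)
           (\<lambda>C i. approx_class (\<tau> i) E (SOME x. x \<in> C))"
proof -
  interpret quasi_polish_chain X E \<tau>
    using assms(1-5) by unfold_locales (simp_all add: saturation_def)
  have "\<tau>\<^sub>\<omega> = join_topology \<tau>"
    unfolding assms(6) join_topology_def ..
  then show ?thesis
    using homeomorphic_map_limit_map unfolding limit_map_def by simp
qed

end
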